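(* Let $\{\alpha_n\}_{n\ge0}$ be a sequence in the open unit disk $\mathbb{D}$, $\rho_n=\sqrt{1-|\alpha_n|^2}$, and for $z\in\partial\mathbb{D}$ let $S_n(z)=\rho_{n-1}^{-1}\begin{pmatrix} z & -\overline{\alpha_{n-1}}\\ -z\alpha_{n-1} & 1\end{pmatrix}$ ($n\ge1$), $T_n(z)=S_n(z)S_{n-1}(z)\cdots S_1(z)$, $T_0(z)=I$. Define $\begin{pmatrix}\varphi_n(z)\\ \varphi_n^\dagger(z)\end{pmatrix}=T_n(z)\begin{pmatrix}1\\1\end{pmatrix}$ and $\begin{pmatrix}\psi_n(z)\\ \psi_n^\dagger(z)\end{pmatrix}=T_n(z)\begin{pmatrix}1\\-1\end{pmatrix}$. Let $z,z'\in\partial\mathbb{D}$ and let $\vec w_n=\begin{pmatrix}w_n\\ w_n^\dagger\end{pmatrix}=T_n(z)\vec w_0$ and $\vec w'_n=\begin{pmatrix}w'_n\\ w'^\dagger_n\end{pmatrix}=T_n(z')\vec w'_0$ with $\vec w_0=\vec w'_0$. Then for every $n\ge0$, $$w'_n=w_n+(z'-z)\sum_{m=0}^{n-1}\frac{1}{2z^{m+1}}\big(\varphi_m^\dagger(z)\psi_n(z)-\varphi_n(z)\psi_m^\dagger(z)\big)w'_m$$ and $$w'^\dagger_n=w_n^\dagger+(z'-z)\sum_{m=0}^{n-1}\frac{1}{2z^{m+1}}\big(\varphi_m^\dagger(z)\psi_n^\dagger(z)-\varphi_n^\dagger(z)\psi_m^\dagger(z)\big)w'_m.$$ *)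

theory Defs
  imports "HOL-Analysis.Analysis"
begin

text \<open>Column vectors in C^2 are represented as pairs (top, bottom).
  rho n = sqrt(1 - |alpha n|^2).\<close>

definition rho :: "(nat \<Rightarrow> complex) \<Rightarrow> nat \<Rightarrow> real" where
  "rho \<alpha> n = sqrt (1 - (cmod (\<alpha> n))\<^sup>2)"

definition S_apply :: "(nat \<Rightarrow> complex) \<Rightarrow> nat \<Rightarrow> complex \<Rightarrow> complex \<times> complex \<Rightarrow> complex \<times> complex" where
  "S_apply \<alpha> n z w =
     (let u = fst w; v = snd w; r = complex_of_real (rho \<alpha> (n - 1)) in
       ((z * u - cnj (\<alpha> (n - 1)) * v) / r, (- z * \<alpha> (n - 1) * u + v) / r))"

fun T_apply :: "(nat \<Rightarrow> complex) \<Rightarrow> nat \<Rightarrow> complex \<Rightarrow> complex \<times> complex \<Rightarrow> complex \<times> complex" where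
  "T_apply \<alpha> 0 z w = w"
| "T_apply \<alpha> (Suc n) z w = S_apply \<alpha> (Suc n) z (T_apply \<alpha> n z w)"

definition phi :: "(nat \<Rightarrow> complex) \<Rightarrow> nat \<Rightarrow> complex \<Rightarrow> complex" where
  "phi \<alpha> n z = fst (T_apply \<alpha> n z (1, 1))"
definition phi_dag :: "(nat \<Rightarrow> complex) \<Rightarrow> nat \<Rightarrow> complex \<Rightarrow> complex" where
  "phi_dag \<alpha> n z = snd (T_apply \<alpha> n z (1, 1))"
definition psi :: "(nat \<Rightarrow> complex) \<Rightarrow> nat \<Rightarrow> complex \<Rightarrow> complex" where
  "psi \<alpha> n z = fst (T_apply \<alpha> n z (1, -1))"
definition psi_dag :: "(nat \<Rightarrow> complex) \<Rightarrow> nat \<Rightarrow> complex \<Rightarrow> complex" where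
  "psi_dag \<alpha> n z = snd (T_apply \<alpha> n z (1, -1))"

end

(* A discrete variation of constants. Only the first column of S_n(z) depends on z, so
   S_n(z') w = S_n(z) w + (z' - z) w_1 S_n(z) (1/z, 0), and w'_n therefore solves an
   inhomogeneous version of the recursion at z. Solving it gives
   w'_n = T_n(z) (w_0 + (z' - z) sum_{m<n} w'_m T_m(z)^-1 (1/z, 0)).
   Since det S_k(z) = z, the matrix with columns T_m(z)(1,1) and T_m(z)(1,-1) has determinant
   -2 z^m, so T_m(z)^-1 (1/z, 0) is an explicit combination of (1,1) and (1,-1) with
   coefficients phi_dag_m and psi_dag_m; applying T_n(z) to it yields the kernel of the
   theorem. *)

theory Submission
  imports Defs
begin

definition pair_scale :: "complex \<Rightarrow> complex \<times> complex \<Rightarrow> complex \<times> complex" where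
  "pair_scale c w = (c * fst w, c * snd w)"

definition pair_det :: "complex \<times> complex \<Rightarrow> complex \<times> complex \<Rightarrow> complex" where
  "pair_det u v = fst u * snd v - snd u * fst v"

lemma fst_pair_scale [simp]: "fst (pair_scale c w) = c * fst w"
  and snd_pair_scale [simp]: "snd (pair_scale c w) = c * snd w"
  by (simp_all add: pair_scale_def)

lemma rho_squared:
  assumes "cmod (\<alpha> n) < 1"
  shows "(complex_of_real (rho \<alpha> n))\<^sup>2 = 1 - \<alpha> n * cnj (\<alpha> n)"
proof -
  have "(cmod (\<alpha> n))\<^sup>2 \<le> 1"
    using assms by (simp add: abs_square_le_1 less_imp_le)
  then have "(complex_of_real (rho \<alpha> n))\<^sup>2 = complex_of_real (1 - (cmod (\<alpha> n))\<^sup>2)"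
    unfolding rho_def of_real_power[symmetric] by simp
  then show ?thesis
    by (simp only: of_real_diff of_real_1 complex_norm_square)
qed

lemma rho_nonzero:
  assumes "cmod (\<alpha> n) < 1"
  shows "complex_of_real (rho \<alpha> n) \<noteq> 0"
proof -
  have "(cmod (\<alpha> n))\<^sup>2 < 1"
    using assms by (simp add: power_less_one_iff abs_square_less_1)
  then show ?thesis
    by (simp add: rho_def)
qed

lemma S_apply_add: "S_apply \<alpha> n z (u + v) = S_apply \<alpha> n z u + S_apply \<alpha> n z v"
  by (simp add: S_apply_def Let_def prod_eq_iff divide_inverse algebra_simps)

lemma S_apply_diff: "S_apply \<alpha> n z (u - v) = S_apply \<alpha> n z u - S_apply \<alpha> n z v"
  by (simp add: S_apply_def Let_def prod_eq_iff divide_inverse algebra_simps)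

lemma S_apply_scale: "S_apply \<alpha> n z (pair_scale c w) = pair_scale c (S_apply \<alpha> n z w)"
  by (simp add: S_apply_def Let_def prod_eq_iff algebra_simps)

lemma T_apply_add: "T_apply \<alpha> n z (u + v) = T_apply \<alpha> n z u + T_apply \<alpha> n z v"
  by (induction n) (simp_all add: S_apply_add)

lemma T_apply_diff: "T_apply \<alpha> n z (u - v) = T_apply \<alpha> n z u - T_apply \<alpha> n z v"
  by (induction n) (simp_all add: S_apply_diff)

lemma T_apply_scale: "T_apply \<alpha> n z (pair_scale c w) = pair_scale c (T_apply \<alpha> n z w)"
  by (induction n) (simp_all add: S_apply_scale)

lemma T_apply_zero: "T_apply \<alpha> n z 0 = 0"
  using T_apply_add[of \<alpha> n z 0 0] by simp

lemma T_apply_sum: "T_apply \<alpha> n z (\<Sum>m\<in>A. f m) = (\<Sum>m\<in>A. T_apply \<alpha> n z (f m))"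
  using sum_comp_morphism[of "T_apply \<alpha> n z" f A]
  by (simp add: T_apply_zero T_apply_add comp_def)

lemma pair_det_scale: "pair_det (pair_scale c u) (pair_scale c v) = c\<^sup>2 * pair_det u v"
  by (simp add: pair_det_def power2_eq_square algebra_simps)

lemma S_apply_eq_scale:
  "S_apply \<alpha> n z w = pair_scale (1 / complex_of_real (rho \<alpha> (n - 1)))
     (z * fst w - cnj (\<alpha> (n - 1)) * snd w, - z * \<alpha> (n - 1) * fst w + snd w)"
  by (simp add: S_apply_def Let_def pair_scale_def)

lemma pair_det_S_apply:
  assumes "cmod (\<alpha> (n - 1)) < 1"
  shows "pair_det (S_apply \<alpha> n z u) (S_apply \<alpha> n z v) = z * pair_det u v"
proof -
  define a where "a = \<alpha> (n - 1)"
  define r where "r = complex_of_real (rho \<alpha> (n - 1))"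
  have r2: "r\<^sup>2 = 1 - a * cnj a" and "r \<noteq> 0"
    unfolding a_def r_def using rho_squared rho_nonzero assms by blast+
  have "pair_det (S_apply \<alpha> n z u) (S_apply \<alpha> n z v)
      = (1 / r)\<^sup>2 * (z * (1 - a * cnj a) * pair_det u v)"
    unfolding S_apply_eq_scale pair_det_scale a_def[symmetric] r_def[symmetric]
    by (simp add: pair_det_def algebra_simps)
  then show ?thesis
    using \<open>r \<noteq> 0\<close> by (simp add: r2[symmetric] power_divide)
qed

lemma pair_det_T_apply:
  assumes "\<And>k. cmod (\<alpha> k) < 1"
  shows "pair_det (T_apply \<alpha> n z u) (T_apply \<alpha> n z v) = z ^ n * pair_det u v"
  by (induction n) (simp_all add: pair_det_S_apply assms)

lemma T_apply_phi: "T_apply \<alpha> n z (1, 1) = (phi \<alpha> n z, phi_dag \<alpha> n z)"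
  by (simp add: phi_def phi_dag_def)

lemma T_apply_psi: "T_apply \<alpha> n z (1, -1) = (psi \<alpha> n z, psi_dag \<alpha> n z)"
  by (simp add: psi_def psi_dag_def)

lemma phi_psi_wronskian:
  assumes "\<And>k. cmod (\<alpha> k) < 1"
  shows "phi_dag \<alpha> n z * psi \<alpha> n z - phi \<alpha> n z * psi_dag \<alpha> n z = 2 * z ^ n"
  using pair_det_T_apply[of \<alpha> n z "(1, -1)" "(1, 1)", OF assms]
  by (simp add: pair_det_def T_apply_phi T_apply_psi algebra_simps)

lemma S_apply_change_spectral_parameter:
  assumes "z \<noteq> 0"
  shows "S_apply \<alpha> n z' w =
    S_apply \<alpha> n z w + pair_scale ((z' - z) * fst w) (S_apply \<alpha> n z (1 / z, 0))"
proof -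
  have "S_apply \<alpha> n z (1 / z, 0) = S_apply \<alpha> n 1 (1, 0)"
    using assms by (simp add: S_apply_def Let_def)
  then show ?thesis
    unfolding \<open>S_apply \<alpha> n z (1 / z, 0) = S_apply \<alpha> n 1 (1, 0)\<close>
    by (simp add: S_apply_def Let_def prod_eq_iff divide_inverse algebra_simps)
qed

lemma T_apply_variation_of_constants:
  assumes "z \<noteq> 0" and v: "\<And>m. T_apply \<alpha> m z (v m) = (1 / z, 0)"
  shows "T_apply \<alpha> n z' w0 =
    T_apply \<alpha> n z (w0 + (\<Sum>m<n. pair_scale ((z' - z) * fst (T_apply \<alpha> m z' w0)) (v m)))"
proof (induction n)
  case 0
  then show ?case by simp
next
  case (Suc n)
  let ?c = "(z' - z) * fst (T_apply \<alpha> n z' w0)"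
  let ?D = "\<Sum>m<n. pair_scale ((z' - z) * fst (T_apply \<alpha> m z' w0)) (v m)"
  have "T_apply \<alpha> (Suc n) z' w0
      = S_apply \<alpha> (Suc n) z (T_apply \<alpha> n z' w0) + pair_scale ?c (S_apply \<alpha> (Suc n) z (1 / z, 0))"
    using S_apply_change_spectral_parameter[OF \<open>z \<noteq> 0\<close>, where z' = z'] by simp
  also have "\<dots> = S_apply \<alpha> (Suc n) z (T_apply \<alpha> n z' w0)
      + pair_scale ?c (S_apply \<alpha> (Suc n) z (T_apply \<alpha> n z (v n)))"
    by (simp only: v)
  also have "\<dots> = T_apply \<alpha> (Suc n) z (w0 + ?D) + T_apply \<alpha> (Suc n) z (pair_scale ?c (v n))"
    by (simp only: Suc.IH T_apply_scale T_apply.simps)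
  also have "\<dots> = T_apply \<alpha> (Suc n) z (w0 + (?D + pair_scale ?c (v n)))"
    by (simp only: T_apply_add add.assoc)
  finally show ?case
    by simp
qed

(* T_m(z)^-1 (1/z, 0), by Cramer's rule and phi_psi_wronskian *)
definition kernel_seed :: "(nat \<Rightarrow> complex) \<Rightarrow> nat \<Rightarrow> complex \<Rightarrow> complex \<times> complex" where
  "kernel_seed \<alpha> m z = pair_scale (1 / (2 * z ^ (m + 1)))
     (pair_scale (phi_dag \<alpha> m z) (1, -1) - pair_scale (psi_dag \<alpha> m z) (1, 1))"

lemma T_apply_kernel_seed:
  "T_apply \<alpha> n z (kernel_seed \<alpha> m z) = pair_scale (1 / (2 * z ^ (m + 1)))
     (phi_dag \<alpha> m z * psi \<alpha> n z - phi \<alpha> n z * psi_dag \<alpha> m z,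
      phi_dag \<alpha> m z * psi_dag \<alpha> n z - phi_dag \<alpha> n z * psi_dag \<alpha> m z)"
  unfolding kernel_seed_def T_apply_scale T_apply_diff T_apply_phi T_apply_psi
  by (simp add: pair_scale_def mult.commute)

lemma T_apply_kernel_seed_diagonal:
  assumes "\<And>k. cmod (\<alpha> k) < 1" and "z \<noteq> 0"
  shows "T_apply \<alpha> m z (kernel_seed \<alpha> m z) = (1 / z, 0)"
  unfolding T_apply_kernel_seed phi_psi_wronskian[of \<alpha> m z, OF assms(1)]
  using assms(2) by (simp add: pair_scale_def)

theorem mainTheorem3:
  fixes \<alpha> :: "nat \<Rightarrow> complex" and z z' :: complex and w0 :: "complex \<times> complex" and n :: nat
  assumes "\<And>k. cmod (\<alpha> k) < 1"
    and "cmod z = 1" and "cmod z' = 1"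
  shows "fst (T_apply \<alpha> n z' w0) = fst (T_apply \<alpha> n z w0)
           + (z' - z) * (\<Sum>m<n. (1 / (2 * z ^ (m + 1))) *
               (phi_dag \<alpha> m z * psi \<alpha> n z - phi \<alpha> n z * psi_dag \<alpha> m z) * fst (T_apply \<alpha> m z' w0))
       \<and> snd (T_apply \<alpha> n z' w0) = snd (T_apply \<alpha> n z w0)
           + (z' - z) * (\<Sum>m<n. (1 / (2 * z ^ (m + 1))) *
               (phi_dag \<alpha> m z * psi_dag \<alpha> n z - phi_dag \<alpha> n z * psi_dag \<alpha> m z) * fst (T_apply \<alpha> m z' w0))"
proof -
  let ?W = "\<lambda>m. fst (T_apply \<alpha> m z' w0)"
  \<comment> \<open>of the hypotheses on z and z', only z \<noteq> 0 is needed\<close>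
  have "z \<noteq> 0"
    using assms(2) by auto
  then have "T_apply \<alpha> n z' w0 = T_apply \<alpha> n z w0 +
      (\<Sum>m<n. pair_scale ((z' - z) * ?W m) (T_apply \<alpha> n z (kernel_seed \<alpha> m z)))"
    using T_apply_variation_of_constants[of z \<alpha> "\<lambda>m. kernel_seed \<alpha> m z" n z' w0]
      T_apply_kernel_seed_diagonal[OF assms(1)]
    by (simp add: T_apply_add T_apply_sum T_apply_scale)
  then have "fst (T_apply \<alpha> n z' w0) = fst (T_apply \<alpha> n z w0) + (\<Sum>m<n. (z' - z) * ?W m *
        (1 / (2 * z ^ (m + 1)) * (phi_dag \<alpha> m z * psi \<alpha> n z - phi \<alpha> n z * psi_dag \<alpha> m z)))"
    and "snd (T_apply \<alpha> n z' w0) = snd (T_apply \<alpha> n z w0) + (\<Sum>m<n. (z' - z) * ?W m *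
        (1 / (2 * z ^ (m + 1)) * (phi_dag \<alpha> m z * psi_dag \<alpha> n z - phi_dag \<alpha> n z * psi_dag \<alpha> m z)))"
    by (simp_all only: fst_add snd_add fst_sum snd_sum fst_pair_scale snd_pair_scale
        T_apply_kernel_seed fst_conv snd_conv)
  then show ?thesis
    by (simp add: sum_distrib_left mult_ac)
qed

end
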